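(* Let $H_n$ be the pyrene system with $n$ pyrene fragments, and let $F(H_0,x)=1$. Then $F(H_1,x)=4x^2+2x$ and for all $n\ge 2$, $$F(H_n,x)=(4x^2+2x)F(H_{n-1},x)-x^2F(H_{n-2},x).$$
   Context: Pyrene system: draw the hexagonal lattice so that every hexagon has two vertical sides; horizontally adjacent hexagons then share a vertical edge. For $n\ge1$, $H_n$ is the hexagonal system (the plane graph formed by the vertices and edges of the following $4n$ hexagons) consisting of a horizontal linear row of $2n$ hexagons $h_{1,1},h_{1,2},\dots,h_{n,1},h_{n,2}$, consecutive ones sharing a vertical edge, together with, for each $i$, a hexagon $s_{i,1}$ directly above and a hexagon $s_{i,2}$ directly below the common edge of $h_{i,1}$ and $h_{i,2}$ (each sharing an edge with both $h_{i,1}$ and $h_{i,2}$). $H_0$ is the null graph. For a perfect matching $M$ of $G$, a forcing set is a subset $S\subseteq M$ contained in no other perfect matching of $G$, and the forcing number $f(G,M)$ is the minimum size of a forcing set. The forcing polynomial is $F(G,x)=\sum_{M\in\mathcal{M}(G)}x^{f(G,M)}$, where $\mathcal{M}(G)$ is the set of perfect matchings of $G$. *)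

theory Defs
  imports "HOL-Computational_Algebra.Polynomial"
begin

text \<open>A (finite simple) graph is given by a vertex set V and an edge set E of
  2-element vertex sets.\<close>

definition perfect_matching :: "'a set \<Rightarrow> 'a set set \<Rightarrow> 'a set set \<Rightarrow> bool" where
  "perfect_matching V E M \<longleftrightarrow> M \<subseteq> E \<and> (\<forall>v\<in>V. \<exists>!e. e \<in> M \<and> v \<in> e)"

definition forcing_set :: "'a set \<Rightarrow> 'a set set \<Rightarrow> 'a set set \<Rightarrow> 'a set set \<Rightarrow> bool" where
  "forcing_set V E M S \<longleftrightarrow> S \<subseteq> M \<and>
     (\<forall>M'. perfect_matching V E M' \<and> S \<subseteq> M' \<longrightarrow> M' = M)"

definition forcing_number :: "'a set \<Rightarrow> 'a set set \<Rightarrow> 'a set set \<Rightarrow> nat" where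
  "forcing_number V E M = (LEAST k. \<exists>S. forcing_set V E M S \<and> card S = k)"

definition forcing_poly :: "'a set \<Rightarrow> 'a set set \<Rightarrow> int poly" where
  "forcing_poly V E = (\<Sum>M\<in>{M. perfect_matching V E M}. monom 1 (forcing_number V E M))"

text \<open>Horizontally adjacent hexagons have centres differing by (2,0)
  and share a vertical edge; the hexagon with centre (x+1,y+3) shares an edge with both
  hexagons centred at (x,y) and (x+2,y), and lies directly above their common edge.\<close>

definition hex_vertices :: "int \<times> int \<Rightarrow> (int \<times> int) set" where
  "hex_vertices c = (case c of (x,y) \<Rightarrow>
     {(x,y+2), (x+1,y+1), (x+1,y-1), (x,y-2), (x-1,y-1), (x-1,y+1)})"

definition hex_edges :: "int \<times> int \<Rightarrow> (int \<times> int) set set" where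
  "hex_edges c = (case c of (x,y) \<Rightarrow>
     {{(x,y+2), (x+1,y+1)}, {(x+1,y+1), (x+1,y-1)}, {(x+1,y-1), (x,y-2)},
      {(x,y-2), (x-1,y-1)}, {(x-1,y-1), (x-1,y+1)}, {(x-1,y+1), (x,y+2)}})"

text \<open>Centres of the 4n hexagons of H_n: h_{i,1}, h_{i,2} have centres (4i-4,0), (4i-2,0)
  (i = 1..n), i.e. a linear row (2k,0), k < 2n; s_{i,1} has centre (4i-3,3) and s_{i,2}
  has centre (4i-3,-3).\<close>

definition pyrene_centres :: "nat \<Rightarrow> (int \<times> int) set" where
  "pyrene_centres n =
     {(2 * int k, 0) | k. k < 2 * n}
     \<union> {(4 * int i - 3, 3) | i. 1 \<le> i \<and> i \<le> n}
     \<union> {(4 * int i - 3, -3) | i. 1 \<le> i \<and> i \<le> n}"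

definition pyrene_V :: "nat \<Rightarrow> (int \<times> int) set" where
  "pyrene_V n = (\<Union>c\<in>pyrene_centres n. hex_vertices c)"

definition pyrene_E :: "nat \<Rightarrow> (int \<times> int) set set" where
  "pyrene_E n = (\<Union>c\<in>pyrene_centres n. hex_edges c)"

definition F_pyrene :: "nat \<Rightarrow> int poly" where
  "F_pyrene n = forcing_poly (pyrene_V n) (pyrene_E n)"

end

theory Submission
  imports Defs
begin

(* The pyrene chain H_n consists of n units: two cap hexagons joined by the middle edge between
   them, with consecutive units sharing a vertical rung of the central row.  In a perfect matching
   every unit is in one of six states: the pendant edges from both caps to the left rung are used,
   or those to the right rung, in both cases together with the middle edge (Left, Right); or none
   of them, and then each cap carries one of its two Kekule structures independently (Caps).  The
   rungs force the upper and lower halves to agree from unit to unit, and the only constraint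
   between neighbours is that Right may not be followed by Left, which would cover a rung vertex
   twice.  So the perfect matchings are the words over six letters avoiding the factor Right Left.

   The forcing number of such a matching is the weight of its word, a Caps letter weighing 2 and
   Left, Right weighing 1: one edge per cap (one pendant edge for Left, Right) determines the word,
   and conversely every unit admits that many alternative words differing from the given one only
   in this unit, whose changes of the matching are pairwise disjoint and must all be met by a
   forcing set.  Splitting the words by their first letter gives F(n+1) = (4x^2 + 2x) F(n) - x L(n),
   where L(n) = x F(n-1) sums over the words starting with Left. *)

section \<open>Perfect matchings and forcing sets\<close>

lemma perfect_matching_subset: "perfect_matching V E M \<Longrightarrow> M \<subseteq> E"
  unfolding perfect_matching_def by blast

lemma perfect_matching_ex1: "perfect_matching V E M \<Longrightarrow> v \<in> V \<Longrightarrow> \<exists>!e. e \<in> M \<and> v \<in> e"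
  unfolding perfect_matching_def by blast

lemma perfect_matching_covers: "perfect_matching V E M \<Longrightarrow> v \<in> V \<Longrightarrow> \<exists>e\<in>M. v \<in> e"
  unfolding perfect_matching_def by blast

lemma perfect_matching_unique:
  "perfect_matching V E M \<Longrightarrow> v \<in> V \<Longrightarrow> e \<in> M \<Longrightarrow> e' \<in> M \<Longrightarrow> v \<in> e \<Longrightarrow> v \<in> e' \<Longrightarrow> e = e'"
  unfolding perfect_matching_def by blast

lemma perfect_matching_subset_eq:
  assumes "perfect_matching V E M" "perfect_matching V E M'" "M \<subseteq> M'"
    and "\<And>e. e \<in> E \<Longrightarrow> e \<inter> V \<noteq> {}"
  shows "M = M'"
proof (rule antisym)
  show "M' \<subseteq> M"
  proof
    fix e assume e: "e \<in> M'"
    then have "e \<in> E"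
      using perfect_matching_subset[OF assms(2)] by blast
    then obtain v where v: "v \<in> e" "v \<in> V"
      using assms(4) by blast
    then obtain e' where e': "e' \<in> M" "v \<in> e'"
      using perfect_matching_covers[OF assms(1)] by blast
    have "e' = e"
      using perfect_matching_unique[OF assms(2) v(2)] e' e v(1) assms(3) by blast
    with e' show "e \<in> M"
      by simp
  qed
qed (rule assms(3))

lemma forcing_numberI:
  assumes "forcing_set V E M S" "card S = k" "\<And>S'. forcing_set V E M S' \<Longrightarrow> k \<le> card S'"
  shows "forcing_number V E M = k"
  unfolding forcing_number_def using assms by (intro Least_equality) auto

lemma forcing_set_meets_diff:
  assumes "forcing_set V E M S" "perfect_matching V E M'" "M' \<noteq> M"
  shows "S \<inter> (M - M') \<noteq> {}"
proof
  assume "S \<inter> (M - M') = {}"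
  then have "S \<subseteq> M'"
    using assms(1) unfolding forcing_set_def by blast
  then show False
    using assms unfolding forcing_set_def by blast
qed

lemma card_le_forcing_set:
  assumes S: "forcing_set V E M S" and "finite M"
    and alt: "\<And>p. p \<in> P \<Longrightarrow> perfect_matching V E (N p) \<and> N p \<noteq> M"
    and disj: "\<And>p q. p \<in> P \<Longrightarrow> q \<in> P \<Longrightarrow> p \<noteq> q \<Longrightarrow> (M - N p) \<inter> (M - N q) = {}"
  shows "card P \<le> card S"
proof -
  have "\<exists>e. e \<in> S \<inter> (M - N p)" if "p \<in> P" for p
    using forcing_set_meets_diff[OF S, of "N p"] alt[OF that] by blast
  then obtain g where g: "\<And>p. p \<in> P \<Longrightarrow> g p \<in> S \<inter> (M - N p)"
    by metis
  have "inj_on g P"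
  proof (rule inj_onI, rule ccontr)
    fix p q assume "p \<in> P" "q \<in> P" "g p = g q" "p \<noteq> q"
    then show False
      using g[of p] g[of q] disj[of p q] by auto
  qed
  moreover have "S \<subseteq> M"
    using S unfolding forcing_set_def by blast
  then have "finite S"
    using \<open>finite M\<close> by (rule finite_subset)
  ultimately show ?thesis
    using g by (intro card_inj_on_le) auto
qed

lemma forcing_poly_empty: "forcing_poly {} {} = 1"
proof -
  have matchings: "{M. perfect_matching {} {} M} = {{} :: 'a set set}"
    unfolding perfect_matching_def by auto
  have "forcing_number {} {} ({} :: 'a set set) = 0"
    unfolding forcing_number_def forcing_set_def perfect_matching_def by auto
  then show ?thesis
    unfolding forcing_poly_def matchings by simp
qed

section \<open>Invariance under injective relabelling\<close>

lemma ex1_image_iff: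
  assumes "inj_on g A"
  shows "(\<exists>!y. y \<in> g ` A \<and> P y) \<longleftrightarrow> (\<exists>!x. x \<in> A \<and> P (g x))"
proof
  assume "\<exists>!y. y \<in> g ` A \<and> P y"
  then obtain x where x: "x \<in> A" "P (g x)"
    and uniq: "\<And>y. y \<in> g ` A \<Longrightarrow> P y \<Longrightarrow> y = g x"
    by blast
  show "\<exists>!x. x \<in> A \<and> P (g x)"
  proof (rule ex1I[of _ x])
    fix x' assume "x' \<in> A \<and> P (g x')"
    then show "x' = x"
      using uniq x(1) assms by (metis image_eqI inj_onD)
  qed (use x in blast)
next
  assume "\<exists>!x. x \<in> A \<and> P (g x)"
  then show "\<exists>!y. y \<in> g ` A \<and> P y"
    by blast
qed

lemma inj_image: "inj f \<Longrightarrow> inj (image f)"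
  by (simp add: inj_def inj_image_eq_iff)

lemma perfect_matching_image_iff:
  assumes "inj f"
  shows "perfect_matching (f ` V) (image f ` E) (image f ` M) \<longleftrightarrow> perfect_matching V E M"
proof -
  have "(\<exists>!e'. e' \<in> image f ` M \<and> f v \<in> e') \<longleftrightarrow> (\<exists>!e. e \<in> M \<and> v \<in> e)" for v
    using assms inj_on_subset[OF inj_image[OF assms]]
    by (simp add: ex1_image_iff inj_image_mem_iff)
  moreover have "image f ` M \<subseteq> image f ` E \<longleftrightarrow> M \<subseteq> E"
    using inj_image_subset_iff[OF inj_image[OF assms]] .
  ultimately show ?thesis
    unfolding perfect_matching_def by (simp only: ball_simps)
qed

lemma perfect_matchings_image:
  assumes "inj f"
  shows "{M'. perfect_matching (f ` V) (image f ` E) M'} =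
         image (image f) ` {M. perfect_matching V E M}"
proof (intro equalityI subsetI)
  fix M' assume "M' \<in> {M'. perfect_matching (f ` V) (image f ` E) M'}"
  moreover from this have "M' \<subseteq> image f ` E"
    unfolding perfect_matching_def by blast
  then obtain M where "M' = image f ` M"
    by (auto simp: subset_image_iff)
  ultimately show "M' \<in> image (image f) ` {M. perfect_matching V E M}"
    using perfect_matching_image_iff[OF assms] by auto
qed (use perfect_matching_image_iff[OF assms] in auto)

lemma forcing_set_image_iff:
  assumes "inj f"
  shows "forcing_set (f ` V) (image f ` E) (image f ` M) (image f ` S) \<longleftrightarrow> forcing_set V E M S"
proof -
  note sub = inj_image_subset_iff[OF inj_image[OF assms]]
  note eq = inj_image_eq_iff[OF inj_image[OF assms]]
  have "(\<forall>M'. perfect_matching (f ` V) (image f ` E) M' \<and> image f ` S \<subseteq> M' \<longrightarrow> M' = image f ` M)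
    \<longleftrightarrow> (\<forall>N \<in> {M'. perfect_matching (f ` V) (image f ` E) M'}. image f ` S \<subseteq> N \<longrightarrow> N = image f ` M)"
    by (simp only: Ball_def mem_Collect_eq imp_conjL)
  also have "\<dots> \<longleftrightarrow> (\<forall>N \<in> image (image f) ` {M. perfect_matching V E M}. image f ` S \<subseteq> N \<longrightarrow> N = image f ` M)"
    unfolding perfect_matchings_image[OF assms] ..
  also have "\<dots> \<longleftrightarrow> (\<forall>N. perfect_matching V E N \<and> S \<subseteq> N \<longrightarrow> N = M)"
    by (auto simp: sub eq)
  finally show ?thesis
    unfolding forcing_set_def sub by blast
qed

lemma forcing_number_image:
  assumes "inj f"
  shows "forcing_number (f ` V) (image f ` E) (image f ` M) = forcing_number V E M"
proof -
  have card: "card (image f ` S) = card S" for S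
    using inj_on_subset[OF inj_image[OF assms]] by (simp add: card_image)
  have "(\<exists>S'. forcing_set (f ` V) (image f ` E) (image f ` M) S' \<and> card S' = k) \<longleftrightarrow>
        (\<exists>S. forcing_set V E M S \<and> card S = k)" for k
  proof
    assume "\<exists>S'. forcing_set (f ` V) (image f ` E) (image f ` M) S' \<and> card S' = k"
    then obtain S' where S': "forcing_set (f ` V) (image f ` E) (image f ` M) S'" "card S' = k"
      by blast
    then have "S' \<subseteq> image f ` M"
      unfolding forcing_set_def by blast
    then obtain S where S: "S' = image f ` S"
      by (auto simp: subset_image_iff)
    have "forcing_set V E M S" "card S = k"
      using S' forcing_set_image_iff[OF assms] card unfolding S by simp_all
    then show "\<exists>S. forcing_set V E M S \<and> card S = k"
      by blast
  next
    assume "\<exists>S. forcing_set V E M S \<and> card S = k"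
    then obtain S where "forcing_set V E M S" "card S = k"
      by blast
    then show "\<exists>S'. forcing_set (f ` V) (image f ` E) (image f ` M) S' \<and> card S' = k"
      by (intro exI[of _ "image f ` S"]) (simp add: forcing_set_image_iff[OF assms] card)
  qed
  then show ?thesis
    unfolding forcing_number_def by (simp only:)
qed

lemma forcing_poly_image:
  assumes "inj f"
  shows "forcing_poly (f ` V) (image f ` E) = forcing_poly V E"
  unfolding forcing_poly_def perfect_matchings_image[OF assms]
  by (simp add: sum.reindex inj_on_subset[OF inj_image[OF inj_image[OF assms]]]
      forcing_number_image[OF assms])

section \<open>The pyrene system as a chain of units\<close>

datatype corner = C1 | C2 | C3 | C4 | C5 | C6

(* Cap i s c is corner c of the cap hexagon s_{i+1,1} (s = True) or s_{i+1,2} (s = False), and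
   Rung j s is the upper (s = True) or lower end of the vertical edge left of h_{j+1,1} (right of
   h_{n,2} for j = n).  The corners C1, ..., C6 run clockwise from the lower left corner of the
   upper cap; the lower cap is its mirror image (see pos). *)
datatype vert = Cap nat bool corner | Rung nat bool

fun corner_pos :: "corner \<Rightarrow> int \<times> int" where
  "corner_pos C1 = (0, 2)" | "corner_pos C2 = (0, 4)" | "corner_pos C3 = (1, 5)"
| "corner_pos C4 = (2, 4)" | "corner_pos C5 = (2, 2)" | "corner_pos C6 = (1, 1)"

fun pos :: "vert \<Rightarrow> int \<times> int" where
  "pos (Cap i s c) = (4 * int i + fst (corner_pos c), (if s then 1 else -1) * snd (corner_pos c))"
| "pos (Rung j s) = (4 * int j - 1, if s then 1 else -1)"

lemma pos_Cap_eq: "pos (Cap i s c) = pos (Cap i' s' c') \<Longrightarrow> i = i' \<and> s = s' \<and> c = c'"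
  by (cases c; cases c'; cases s; cases s'; simp; presburger)

lemma pos_Cap_neq_Rung: "pos (Cap i s c) \<noteq> pos (Rung j s')"
  by (cases c; cases s; cases s'; simp; presburger)

lemma inj_pos: "inj pos"
proof (rule injI)
  fix u v assume eq: "pos u = pos v"
  show "u = v"
  proof (cases u; cases v)
    fix i s c i' s' c' assume "u = Cap i s c" "v = Cap i' s' c'"
    then show ?thesis
      using eq pos_Cap_eq[of i s c i' s' c'] by simp
  next
    fix i s c j s' assume "u = Cap i s c" "v = Rung j s'"
    then show ?thesis
      using eq pos_Cap_neq_Rung[of i s c j s'] by simp
  next
    fix i s c j s' assume "u = Rung j s'" "v = Cap i s c"
    then show ?thesis
      using eq pos_Cap_neq_Rung[of i s c j s'] by simp
  next
    fix j s j' s' assume "u = Rung j s" "v = Rung j' s'"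
    then show ?thesis
      using eq by (simp split: if_splits)
  qed
qed

definition hexagon :: "'a \<Rightarrow> 'a \<Rightarrow> 'a \<Rightarrow> 'a \<Rightarrow> 'a \<Rightarrow> 'a \<Rightarrow> 'a set set" where
  "hexagon a b c d e f = {{a, b}, {b, c}, {c, d}, {d, e}, {e, f}, {f, a}}"

lemma Union_hexagon: "\<Union>(hexagon a b c d e f) = {a, b, c, d, e, f}"
  by (auto simp: hexagon_def)

lemma hex_edges_eq:
  "hex_edges (x, y) =
     hexagon (x, y + 2) (x + 1, y + 1) (x + 1, y - 1) (x, y - 2) (x - 1, y - 1) (x - 1, y + 1)"
  by (simp add: hex_edges_def hexagon_def)

lemma hex_vertices_eq_Union: "hex_vertices c = \<Union>(hex_edges c)"
  by (cases c) (simp add: hex_vertices_def hex_edges_eq Union_hexagon)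

lemma pyrene_V_eq_Union: "pyrene_V n = \<Union>(pyrene_E n)"
  unfolding pyrene_V_def pyrene_E_def hex_vertices_eq_Union by blast

definition unit_centres :: "nat \<Rightarrow> (int \<times> int) set" where
  "unit_centres i = {(4 * int i, 0), (4 * int i + 2, 0), (4 * int i + 1, 3), (4 * int i + 1, -3)}"

lemma pyrene_centres_eq: "pyrene_centres n = (\<Union>i<n. unit_centres i)"
proof (intro equalityI subsetI)
  fix c assume "c \<in> pyrene_centres n"
  then consider k where "c = (2 * int k, 0)" "k < 2 * n"
    | i where "c = (4 * int i - 3, 3) \<or> c = (4 * int i - 3, -3)" "1 \<le> i" "i \<le> n"
    unfolding pyrene_centres_def by blast
  then show "c \<in> (\<Union>i<n. unit_centres i)"
  proof cases
    case (1 k)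
    then have "k div 2 < n" "c = (4 * int (k div 2), 0) \<or> c = (4 * int (k div 2) + 2, 0)"
      by auto
    then show ?thesis
      unfolding unit_centres_def by blast
  next
    case (2 i)
    then have "i - 1 < n" "4 * int i - 3 = 4 * int (i - 1) + 1"
      by auto
    with 2 show ?thesis
      unfolding unit_centres_def by blast
  qed
next
  fix c assume "c \<in> (\<Union>i<n. unit_centres i)"
  then obtain i where "i < n" "c \<in> unit_centres i"
    by blast
  have "(2 * int (2 * i), 0) \<in> pyrene_centres n"
    unfolding pyrene_centres_def using \<open>i < n\<close> by (intro UnI1 CollectI exI[of _ "2 * i"]) simp
  moreover have "(2 * int (2 * i + 1), 0) \<in> pyrene_centres n"
    unfolding pyrene_centres_def using \<open>i < n\<close> by (intro UnI1 CollectI exI[of _ "2 * i + 1"]) simp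
  moreover have "(4 * int (Suc i) - 3, 3) \<in> pyrene_centres n"
    unfolding pyrene_centres_def
    by (rule UnI1, rule UnI2, intro CollectI exI[of _ "Suc i"]) (simp add: Suc_le_eq \<open>i < n\<close>)
  moreover have "(4 * int (Suc i) - 3, -3) \<in> pyrene_centres n"
    unfolding pyrene_centres_def using \<open>i < n\<close> by (intro UnI2 CollectI exI[of _ "Suc i"]) simp
  ultimately show "c \<in> pyrene_centres n"
    using \<open>c \<in> unit_centres i\<close> unfolding unit_centres_def by (auto simp: algebra_simps)
qed

definition left_edge :: "nat \<Rightarrow> bool \<Rightarrow> vert set" where
  "left_edge i s = {Rung i s, Cap i s C1}"

definition right_edge :: "nat \<Rightarrow> bool \<Rightarrow> vert set" where
  "right_edge i s = {Cap i s C5, Rung (Suc i) s}"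

definition rung :: "nat \<Rightarrow> vert set" where
  "rung j = {Rung j True, Rung j False}"

definition mid_edge :: "nat \<Rightarrow> vert set" where
  "mid_edge i = {Cap i True C6, Cap i False C6}"

definition cap_edge :: "nat \<Rightarrow> bool \<Rightarrow> corner \<Rightarrow> corner \<Rightarrow> vert set" where
  "cap_edge i s a b = {Cap i s a, Cap i s b}"

lemmas edge_defs = left_edge_def right_edge_def rung_def mid_edge_def cap_edge_def

definition cap_hexagon :: "nat \<Rightarrow> bool \<Rightarrow> vert set set" where
  "cap_hexagon i s = hexagon (Cap i s C1) (Cap i s C2) (Cap i s C3) (Cap i s C4) (Cap i s C5) (Cap i s C6)"

definition unit_edges :: "nat \<Rightarrow> vert set set" where
  "unit_edges i = cap_hexagon i True \<union> cap_hexagon i False \<union>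
     {left_edge i True, left_edge i False, right_edge i True, right_edge i False,
      mid_edge i, rung i, rung (Suc i)}"

lemma image_pos_unit_edges: "image pos ` unit_edges i = (\<Union>c\<in>unit_centres i. hex_edges c)"
  by (simp add: unit_edges_def cap_hexagon_def unit_centres_def hex_edges_eq hexagon_def edge_defs
      insert_commute add.commute)

definition chain_edges :: "nat \<Rightarrow> vert set set" where
  "chain_edges n = (\<Union>i<n. unit_edges i)"

abbreviation chain_pm :: "nat \<Rightarrow> vert set set \<Rightarrow> bool" where
  "chain_pm n M \<equiv> perfect_matching (\<Union>(chain_edges n)) (chain_edges n) M"

lemma finite_chain_edges: "finite (chain_edges n)"
  by (simp add: chain_edges_def unit_edges_def cap_hexagon_def hexagon_def)

lemma pyrene_E_eq: "pyrene_E n = image pos ` chain_edges n"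
  unfolding pyrene_E_def pyrene_centres_eq chain_edges_def image_UN image_pos_unit_edges
  by blast

lemma F_pyrene_eq: "F_pyrene n = forcing_poly (\<Union>(chain_edges n)) (chain_edges n)"
proof -
  have "pyrene_V n = pos ` \<Union>(chain_edges n)"
    unfolding pyrene_V_eq_Union pyrene_E_eq by blast
  then show ?thesis
    unfolding F_pyrene_def pyrene_E_eq by (simp add: forcing_poly_image inj_pos)
qed

lemma F_pyrene_0: "F_pyrene 0 = 1"
  by (simp add: F_pyrene_eq chain_edges_def forcing_poly_empty)

lemma Cap_in_Union_chain_edges: "Cap i s c \<in> \<Union>(chain_edges n) \<longleftrightarrow> i < n"
  by (cases s; cases c) (auto simp: chain_edges_def unit_edges_def cap_hexagon_def hexagon_def edge_defs)

lemma rung_in_chain_edges: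
  assumes "0 < n" "j \<le> n"
  shows "rung j \<in> chain_edges n"
proof (cases "j < n")
  case True
  then show ?thesis
    by (auto simp: chain_edges_def unit_edges_def)
next
  case False
  with assms have "j = Suc (n - 1)" "n - 1 < n"
    by simp_all
  then show ?thesis
    unfolding chain_edges_def unit_edges_def by blast
qed

lemma Rung_in_Union_chain_edges: "Rung j s \<in> \<Union>(chain_edges n) \<longleftrightarrow> 0 < n \<and> j \<le> n"
proof
  assume "Rung j s \<in> \<Union>(chain_edges n)"
  then show "0 < n \<and> j \<le> n"
    by (auto simp: chain_edges_def unit_edges_def cap_hexagon_def hexagon_def edge_defs)
next
  assume "0 < n \<and> j \<le> n"
  moreover have "Rung j s \<in> rung j"
    by (cases s) (simp_all add: rung_def)
  ultimately show "Rung j s \<in> \<Union>(chain_edges n)"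
    using rung_in_chain_edges by blast
qed

fun edges_at :: "nat \<Rightarrow> bool \<Rightarrow> corner \<Rightarrow> vert set set" where
  "edges_at i s C1 = {left_edge i s, cap_edge i s C1 C2, cap_edge i s C6 C1}"
| "edges_at i s C2 = {cap_edge i s C1 C2, cap_edge i s C2 C3}"
| "edges_at i s C3 = {cap_edge i s C2 C3, cap_edge i s C3 C4}"
| "edges_at i s C4 = {cap_edge i s C3 C4, cap_edge i s C4 C5}"
| "edges_at i s C5 = {cap_edge i s C4 C5, cap_edge i s C5 C6, right_edge i s}"
| "edges_at i s C6 = {cap_edge i s C5 C6, cap_edge i s C6 C1, mid_edge i}"

lemma chain_edges_at_Cap:
  assumes "e \<in> chain_edges n" "Cap i s c \<in> e"
  shows "e \<in> edges_at i s c"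
  using assms unfolding chain_edges_def unit_edges_def cap_hexagon_def hexagon_def
  by (cases s; cases c) (auto simp: edge_defs doubleton_eq_iff)

lemma chain_edges_at_Rung:
  assumes "e \<in> chain_edges n" "Rung j s \<in> e"
  shows "(j < n \<and> e = left_edge j s) \<or> (0 < j \<and> e = right_edge (j - 1) s) \<or> e = rung j"
  using assms unfolding chain_edges_def unit_edges_def cap_hexagon_def hexagon_def
  by (cases s) (auto simp: edge_defs)

section \<open>Perfect matchings of the chain as words\<close>

datatype state = is_Caps: Caps bool bool | Left | Right

definition kekule :: "nat \<Rightarrow> bool \<Rightarrow> bool \<Rightarrow> vert set set" where
  "kekule i s b = (if b then {cap_edge i s C2 C3, cap_edge i s C4 C5, cap_edge i s C6 C1}
                   else {cap_edge i s C1 C2, cap_edge i s C3 C4, cap_edge i s C5 C6})"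

fun state_edges :: "nat \<Rightarrow> state \<Rightarrow> vert set set" where
  "state_edges i (Caps b1 b2) = kekule i True b1 \<union> kekule i False b2"
| "state_edges i Left = {left_edge i True, left_edge i False, mid_edge i,
     cap_edge i True C2 C3, cap_edge i True C4 C5, cap_edge i False C2 C3, cap_edge i False C4 C5}"
| "state_edges i Right = {right_edge i True, right_edge i False, mid_edge i,
     cap_edge i True C1 C2, cap_edge i True C3 C4, cap_edge i False C1 C2, cap_edge i False C3 C4}"

definition admissible :: "state list \<Rightarrow> bool" where
  "admissible = successively (\<lambda>x y. \<not> (x = Right \<and> y = Left))"

lemma admissible_iff_nth:
  "admissible xs \<longleftrightarrow> (\<forall>i. Suc i < length xs \<longrightarrow> \<not> (xs ! i = Right \<and> xs ! Suc i = Left))"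
  unfolding admissible_def
  by (induction "\<lambda>x y. \<not> (x = Right \<and> y = Left)" xs rule: successively.induct)
    (auto simp: nth_Cons split: nat.split)

definition free_rung :: "state list \<Rightarrow> nat \<Rightarrow> bool" where
  "free_rung xs j \<longleftrightarrow> \<not> (0 < j \<and> xs ! (j - 1) = Right) \<and> \<not> (j < length xs \<and> xs ! j = Left)"

definition matching_of :: "state list \<Rightarrow> vert set set" where
  "matching_of xs =
     (\<Union>i<length xs. state_edges i (xs ! i)) \<union> {rung j |j. j \<le> length xs \<and> free_rung xs j}"

lemma ex1_state_edges_at_Cap: "\<exists>!e. e \<in> state_edges i x \<and> Cap i s c \<in> e"
  by (cases x; cases s; cases c) (auto simp: edge_defs kekule_def)

lemma state_edges_Cap_index: "e \<in> state_edges i' x \<Longrightarrow> Cap i s c \<in> e \<Longrightarrow> i' = i"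
  by (cases x) (auto simp: edge_defs kekule_def split: if_splits)

lemma state_edges_disjoint: "i \<noteq> i' \<Longrightarrow> state_edges i x \<inter> state_edges i' y = {}"
proof -
  have "\<exists>s c. Cap i s c \<in> e" if "e \<in> state_edges i x" for e i x
    using that by (cases x) (auto simp: edge_defs kekule_def split: if_splits)
  then show "i \<noteq> i' \<Longrightarrow> state_edges i x \<inter> state_edges i' y = {}"
    using state_edges_Cap_index by blast
qed

lemma state_edges_at_Rung:
  "e \<in> state_edges i x \<and> Rung j s \<in> e \<longleftrightarrow>
     (x = Left \<and> j = i \<and> e = left_edge i s) \<or> (x = Right \<and> j = Suc i \<and> e = right_edge i s)"
  by (cases x; cases s) (auto simp: edge_defs kekule_def)

lemma state_edges_subset: "state_edges i x \<subseteq> unit_edges i"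
  by (cases x)
    (auto simp: unit_edges_def cap_hexagon_def hexagon_def edge_defs kekule_def doubleton_eq_iff)

lemma matching_of_at_Cap:
  assumes "i < length xs"
  shows "e \<in> matching_of xs \<and> Cap i s c \<in> e \<longleftrightarrow> e \<in> state_edges i (xs ! i) \<and> Cap i s c \<in> e"
  using assms state_edges_Cap_index[of e _ _ i s c] unfolding matching_of_def by (auto simp: rung_def)

lemma matching_of_at_Rung:
  assumes "j \<le> length xs"
  shows "e \<in> matching_of xs \<and> Rung j s \<in> e \<longleftrightarrow>
     (j < length xs \<and> xs ! j = Left \<and> e = left_edge j s) \<or>
     (0 < j \<and> xs ! (j - 1) = Right \<and> e = right_edge (j - 1) s) \<or>
     (free_rung xs j \<and> e = rung j)" (is "_ \<longleftrightarrow> ?rhs")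
proof -
  have "Rung j s \<in> rung j' \<longleftrightarrow> j' = j" for j'
    by (cases s) (auto simp: rung_def)
  then have "e \<in> matching_of xs \<and> Rung j s \<in> e \<longleftrightarrow>
      (\<exists>i<length xs. e \<in> state_edges i (xs ! i) \<and> Rung j s \<in> e) \<or> (free_rung xs j \<and> e = rung j)"
    using assms unfolding matching_of_def by auto
  also have "\<dots> \<longleftrightarrow> (\<exists>i<length xs. (xs ! i = Left \<and> j = i \<and> e = left_edge i s) \<or>
      (xs ! i = Right \<and> j = Suc i \<and> e = right_edge i s)) \<or> (free_rung xs j \<and> e = rung j)"
    by (simp only: state_edges_at_Rung)
  also have "\<dots> \<longleftrightarrow> ?rhs"
    using assms by (cases j) (simp_all add: ex_disj_distrib conj_disj_distribL)
  finally show ?thesis .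
qed

lemma matching_of_subset:
  assumes "0 < length xs"
  shows "matching_of xs \<subseteq> chain_edges (length xs)"
proof
  fix e assume "e \<in> matching_of xs"
  then consider i where "i < length xs" "e \<in> state_edges i (xs ! i)"
    | j where "e = rung j" "j \<le> length xs"
    unfolding matching_of_def by blast
  then show "e \<in> chain_edges (length xs)"
  proof cases
    case 1
    then show ?thesis
      using state_edges_subset unfolding chain_edges_def by blast
  next
    case 2
    then show ?thesis
      using rung_in_chain_edges assms by simp
  qed
qed

lemma perfect_matching_matching_of:
  assumes "admissible xs" "0 < length xs"
  shows "chain_pm (length xs) (matching_of xs)"
  unfolding perfect_matching_def
proof (intro conjI ballI)
  show "matching_of xs \<subseteq> chain_edges (length xs)"
    using assms(2) by (rule matching_of_subset)
next
  fix v assume v: "v \<in> \<Union>(chain_edges (length xs))"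
  show "\<exists>!e. e \<in> matching_of xs \<and> v \<in> e"
  proof (cases v)
    case (Cap i s c)
    then have "i < length xs"
      using v by (simp only: Cap_in_Union_chain_edges)
    with Cap show ?thesis
      using matching_of_at_Cap ex1_state_edges_at_Cap by simp
  next
    case (Rung j s)
    then have j: "j \<le> length xs"
      using v by (simp only: Rung_in_Union_chain_edges)
    have not_both: "\<not> (0 < j \<and> xs ! (j - 1) = Right \<and> j < length xs \<and> xs ! j = Left)"
    proof
      assume "0 < j \<and> xs ! (j - 1) = Right \<and> j < length xs \<and> xs ! j = Left"
      then have "Suc (j - 1) < length xs \<and> xs ! (j - 1) = Right \<and> xs ! Suc (j - 1) = Left"
        by simp
      with assms(1) show False
        unfolding admissible_iff_nth by blast
    qed
    define e0 where "e0 = (if 0 < j \<and> xs ! (j - 1) = Right then right_edge (j - 1) s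
      else if j < length xs \<and> xs ! j = Left then left_edge j s else rung j)"
    have "e \<in> matching_of xs \<and> Rung j s \<in> e \<longleftrightarrow> e = e0" for e
      unfolding matching_of_at_Rung[OF j] e0_def free_rung_def using not_both by auto
    then show ?thesis
      using Rung by simp
  qed
qed

definition exactly_one :: "bool \<Rightarrow> bool \<Rightarrow> bool \<Rightarrow> bool" where
  "exactly_one a b c \<longleftrightarrow> (a \<or> b \<or> c) \<and> \<not> (a \<and> b) \<and> \<not> (a \<and> c) \<and> \<not> (b \<and> c)"

lemma ex1_mem_two_iff: "a \<noteq> b \<Longrightarrow> (\<exists>!e. e \<in> {a, b} \<and> e \<in> M) \<longleftrightarrow> (a \<in> M \<longleftrightarrow> b \<notin> M)"
  by auto

lemma ex1_mem_three_iff: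
  "a \<noteq> b \<Longrightarrow> a \<noteq> c \<Longrightarrow> b \<noteq> c \<Longrightarrow>
    (\<exists>!e. e \<in> {a, b, c} \<and> e \<in> M) \<longleftrightarrow> exactly_one (a \<in> M) (b \<in> M) (c \<in> M)"
  unfolding exactly_one_def by auto

lemma Cap_in_edges_at: "e \<in> edges_at i s c \<Longrightarrow> Cap i s c \<in> e"
  by (cases c) (auto simp: edge_defs)

lemma ex1_edges_at:
  assumes "chain_pm n M" "i < n"
  shows "\<exists>!e. e \<in> edges_at i s c \<and> e \<in> M"
proof -
  have "e \<in> M \<and> Cap i s c \<in> e \<longleftrightarrow> e \<in> edges_at i s c \<and> e \<in> M" for e
    using chain_edges_at_Cap perfect_matching_subset[OF assms(1)] Cap_in_edges_at by blast
  moreover have "Cap i s c \<in> \<Union>(chain_edges n)"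
    using assms(2) by (simp only: Cap_in_Union_chain_edges)
  then have "\<exists>!e. e \<in> M \<and> Cap i s c \<in> e"
    by (rule perfect_matching_ex1[OF assms(1)])
  ultimately show ?thesis
    by simp
qed

lemma corner_constraints:
  assumes "chain_pm n M" "i < n"
  shows "exactly_one (left_edge i s \<in> M) (cap_edge i s C1 C2 \<in> M) (cap_edge i s C6 C1 \<in> M)"
    and "cap_edge i s C1 C2 \<in> M \<longleftrightarrow> cap_edge i s C2 C3 \<notin> M"
    and "cap_edge i s C2 C3 \<in> M \<longleftrightarrow> cap_edge i s C3 C4 \<notin> M"
    and "cap_edge i s C3 C4 \<in> M \<longleftrightarrow> cap_edge i s C4 C5 \<notin> M"
    and "exactly_one (cap_edge i s C4 C5 \<in> M) (cap_edge i s C5 C6 \<in> M) (right_edge i s \<in> M)"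
    and "exactly_one (cap_edge i s C5 C6 \<in> M) (cap_edge i s C6 C1 \<in> M) (mid_edge i \<in> M)"
proof -
  note at = ex1_edges_at[OF assms, of s]
  note neq = edge_defs doubleton_eq_iff
  show "exactly_one (left_edge i s \<in> M) (cap_edge i s C1 C2 \<in> M) (cap_edge i s C6 C1 \<in> M)"
    using at[of C1, unfolded edges_at.simps] by (subst (asm) ex1_mem_three_iff) (simp_all add: neq)
  show "cap_edge i s C1 C2 \<in> M \<longleftrightarrow> cap_edge i s C2 C3 \<notin> M"
    using at[of C2, unfolded edges_at.simps] by (subst (asm) ex1_mem_two_iff) (simp_all add: neq)
  show "cap_edge i s C2 C3 \<in> M \<longleftrightarrow> cap_edge i s C3 C4 \<notin> M"
    using at[of C3, unfolded edges_at.simps] by (subst (asm) ex1_mem_two_iff) (simp_all add: neq)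
  show "cap_edge i s C3 C4 \<in> M \<longleftrightarrow> cap_edge i s C4 C5 \<notin> M"
    using at[of C4, unfolded edges_at.simps] by (subst (asm) ex1_mem_two_iff) (simp_all add: neq)
  show "exactly_one (cap_edge i s C4 C5 \<in> M) (cap_edge i s C5 C6 \<in> M) (right_edge i s \<in> M)"
    using at[of C5, unfolded edges_at.simps] by (subst (asm) ex1_mem_three_iff) (simp_all add: neq)
  show "exactly_one (cap_edge i s C5 C6 \<in> M) (cap_edge i s C6 C1 \<in> M) (mid_edge i \<in> M)"
    using at[of C6, unfolded edges_at.simps] by (subst (asm) ex1_mem_three_iff) (simp_all add: neq)
qed

lemma cap_side_Left:
  assumes "chain_pm n M" "i < n" "left_edge i s \<in> M"
  shows "right_edge i s \<notin> M \<and> mid_edge i \<in> M \<and> cap_edge i s C2 C3 \<in> M \<and> cap_edge i s C4 C5 \<in> M"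
  using corner_constraints[OF assms(1,2), of s] assms(3) unfolding exactly_one_def by blast

lemma cap_side_Right:
  assumes "chain_pm n M" "i < n" "right_edge i s \<in> M"
  shows "left_edge i s \<notin> M \<and> mid_edge i \<in> M \<and> cap_edge i s C1 C2 \<in> M \<and> cap_edge i s C3 C4 \<in> M"
  using corner_constraints[OF assms(1,2), of s] assms(3) unfolding exactly_one_def by blast

lemma cap_side_Caps:
  assumes "chain_pm n M" "i < n" "left_edge i s \<notin> M" "right_edge i s \<notin> M"
  shows "mid_edge i \<notin> M \<and> kekule i s (cap_edge i s C6 C1 \<in> M) \<subseteq> M"
  using corner_constraints[OF assms(1,2), of s] assms(3,4) unfolding exactly_one_def kekule_def by auto

lemma rung_constraint:
  assumes "chain_pm n M" "0 < n" "j \<le> n"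
  shows "exactly_one (0 < j \<and> right_edge (j - 1) s \<in> M) (j < n \<and> left_edge j s \<in> M) (rung j \<in> M)"
proof -
  have "Rung j s \<in> \<Union>(chain_edges n)"
    using assms(2,3) by (simp only: Rung_in_Union_chain_edges)
  note uniq = perfect_matching_unique[OF assms(1) this]
  have in_rung: "Rung j s \<in> rung j" and in_left: "Rung j s \<in> left_edge j s"
    and in_right: "0 < j \<Longrightarrow> Rung j s \<in> right_edge (j - 1) s"
    by (cases s; simp add: edge_defs)+
  have "left_edge j s \<noteq> rung j" "right_edge (j - 1) s \<noteq> rung j" "right_edge (j - 1) s \<noteq> left_edge j s"
    by (auto simp: edge_defs doubleton_eq_iff)
  moreover obtain e where "e \<in> M" "Rung j s \<in> e"
    using perfect_matching_covers[OF assms(1) \<open>Rung j s \<in> \<Union>(chain_edges n)\<close>] by blast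
  moreover from this have "(j < n \<and> e = left_edge j s) \<or> (0 < j \<and> e = right_edge (j - 1) s) \<or> e = rung j"
    using chain_edges_at_Rung perfect_matching_subset[OF assms(1)] by blast
  ultimately show ?thesis
    unfolding exactly_one_def
    using uniq[OF _ _ in_rung in_left] uniq[OF _ _ in_right in_rung] uniq[OF _ _ in_right in_left]
    by blast
qed

lemma right_sides_agree:
  assumes "chain_pm n M" "i < n" "left_edge i True \<in> M \<longleftrightarrow> left_edge i False \<in> M"
  shows "right_edge i True \<in> M \<longleftrightarrow> right_edge i False \<in> M"
  using cap_side_Left[OF assms(1,2)] cap_side_Right[OF assms(1,2)] cap_side_Caps[OF assms(1,2)] assms(3)
  by blast

lemma exactly_one_cancel: "exactly_one a b c \<Longrightarrow> exactly_one a' b' c \<Longrightarrow> a = a' \<Longrightarrow> b = b'"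
  unfolding exactly_one_def by blast

lemma sides_agree:
  assumes "chain_pm n M" "i < n"
  shows "(left_edge i True \<in> M \<longleftrightarrow> left_edge i False \<in> M) \<and>
         (right_edge i True \<in> M \<longleftrightarrow> right_edge i False \<in> M)"
  using assms(2)
proof (induction i)
  case 0
  then have "left_edge 0 True \<in> M \<longleftrightarrow> left_edge 0 False \<in> M"
    using exactly_one_cancel[OF rung_constraint[OF assms(1), of 0 True]
        rung_constraint[OF assms(1), of 0 False]]
    by simp
  with 0 show ?case
    using right_sides_agree[OF assms(1)] by simp
next
  case (Suc i)
  then have "right_edge i True \<in> M \<longleftrightarrow> right_edge i False \<in> M"
    by simp
  with Suc.prems have "left_edge (Suc i) True \<in> M \<longleftrightarrow> left_edge (Suc i) False \<in> M"
    using exactly_one_cancel[OF rung_constraint[OF assms(1), of "Suc i" True]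
        rung_constraint[OF assms(1), of "Suc i" False]]
    by simp
  with Suc.prems show ?case
    using right_sides_agree[OF assms(1)] by simp
qed

definition state_at :: "vert set set \<Rightarrow> nat \<Rightarrow> state" where
  "state_at M i = (if left_edge i True \<in> M then Left else if right_edge i True \<in> M then Right
     else Caps (cap_edge i True C6 C1 \<in> M) (cap_edge i False C6 C1 \<in> M))"

definition code_of :: "nat \<Rightarrow> vert set set \<Rightarrow> state list" where
  "code_of n M = map (state_at M) [0..<n]"

lemma length_code_of [simp]: "length (code_of n M) = n"
  by (simp add: code_of_def)

lemma nth_code_of [simp]: "i < n \<Longrightarrow> code_of n M ! i = state_at M i"
  by (simp add: code_of_def)

lemma state_at_eq_Right:
  assumes "chain_pm n M" "i < n"
  shows "state_at M i = Right \<longleftrightarrow> right_edge i True \<in> M"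
  using cap_side_Right[OF assms, of True] by (auto simp: state_at_def)

lemma state_edges_state_at:
  assumes "chain_pm n M" "i < n"
  shows "state_edges i (state_at M i) \<subseteq> M"
proof -
  note agree = sides_agree[OF assms]
  consider "left_edge i True \<in> M" | "left_edge i True \<notin> M" "right_edge i True \<in> M"
    | "left_edge i True \<notin> M" "right_edge i True \<notin> M"
    by blast
  then show ?thesis
  proof cases
    case 1
    then show ?thesis
      using agree cap_side_Left[OF assms, of True] cap_side_Left[OF assms, of False]
      by (simp add: state_at_def)
  next
    case 2
    then show ?thesis
      using agree cap_side_Right[OF assms, of True] cap_side_Right[OF assms, of False]
      by (simp add: state_at_def)
  next
    case 3
    then show ?thesis
      using agree cap_side_Caps[OF assms, of True] cap_side_Caps[OF assms, of False]
      by (simp add: state_at_def)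
  qed
qed

lemma admissible_code_of:
  assumes "chain_pm n M"
  shows "admissible (code_of n M)"
  unfolding admissible_iff_nth
proof (intro allI impI notI)
  fix i assume "Suc i < length (code_of n M)"
    and "code_of n M ! i = Right \<and> code_of n M ! Suc i = Left"
  then have "Suc i < n" "right_edge i True \<in> M" "left_edge (Suc i) True \<in> M"
    using state_at_eq_Right[OF assms, of i] by (auto simp: state_at_def split: if_splits)
  then show False
    using rung_constraint[OF assms, of "Suc i" True] unfolding exactly_one_def by simp
qed

lemma free_rung_code_of:
  assumes "chain_pm n M" "0 < n" "j \<le> n" "free_rung (code_of n M) j"
  shows "rung j \<in> M"
proof -
  have "\<not> (0 < j \<and> right_edge (j - 1) True \<in> M)"
    using assms(3,4) state_at_eq_Right[OF assms(1), of "j - 1"] by (auto simp: free_rung_def)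
  moreover have "\<not> (j < n \<and> left_edge j True \<in> M)"
    using assms(4) by (auto simp: free_rung_def state_at_def)
  ultimately show ?thesis
    using rung_constraint[OF assms(1-3), of True] unfolding exactly_one_def by blast
qed

lemma matching_of_code_of:
  assumes "chain_pm n M" "0 < n"
  shows "matching_of (code_of n M) = M"
proof (rule perfect_matching_subset_eq)
  show "chain_pm n (matching_of (code_of n M))"
    using perfect_matching_matching_of[OF admissible_code_of[OF assms(1)]] assms(2)
    unfolding length_code_of .
  show "matching_of (code_of n M) \<subseteq> M"
  proof
    fix e assume "e \<in> matching_of (code_of n M)"
    then consider i where "i < n" "e \<in> state_edges i (state_at M i)"
      | j where "e = rung j" "j \<le> n" "free_rung (code_of n M) j"
      unfolding matching_of_def by auto
    then show "e \<in> M"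
      using state_edges_state_at[OF assms(1)] free_rung_code_of[OF assms] by cases blast+
  qed
  show "e \<inter> \<Union>(chain_edges n) \<noteq> {}" if "e \<in> chain_edges n" for e
  proof -
    have "e \<noteq> {}"
      using that by (auto simp: chain_edges_def unit_edges_def cap_hexagon_def hexagon_def edge_defs)
    with that show ?thesis
      by blast
  qed
qed (rule assms(1))

lemma code_of_matching_of: "code_of (length xs) (matching_of xs) = xs"
proof (rule nth_equalityI)
  fix i assume "i < length (code_of (length xs) (matching_of xs))"
  then have i: "i < length xs"
    by simp
  have mem: "e \<in> matching_of xs \<longleftrightarrow> e \<in> state_edges i (xs ! i)" if "Cap i s c \<in> e" for e s c
    using matching_of_at_Cap[OF i, of e s c] that by simp
  have "left_edge i True \<in> matching_of xs \<longleftrightarrow> left_edge i True \<in> state_edges i (xs ! i)"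
    by (rule mem) (simp add: edge_defs)
  moreover have "right_edge i True \<in> matching_of xs \<longleftrightarrow> right_edge i True \<in> state_edges i (xs ! i)"
    by (rule mem) (simp add: edge_defs)
  moreover have
    "cap_edge i s C6 C1 \<in> matching_of xs \<longleftrightarrow> cap_edge i s C6 C1 \<in> state_edges i (xs ! i)" for s
    by (rule mem[where s = s and c = C1]) (simp add: edge_defs)
  ultimately have "state_at (matching_of xs) i = xs ! i"
    by (cases "xs ! i") (auto simp: state_at_def edge_defs kekule_def doubleton_eq_iff)
  with i show "code_of (length xs) (matching_of xs) ! i = xs ! i"
    by simp
qed simp

definition codes :: "nat \<Rightarrow> state list set" where
  "codes n = {xs. length xs = n \<and> admissible xs}"

lemma codes_0: "codes 0 = {[]}"
  by (auto simp: codes_def admissible_def)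

lemma chain_matchings_eq:
  assumes "0 < n"
  shows "{M. chain_pm n M} = matching_of ` codes n"
proof (intro equalityI subsetI)
  fix M assume "M \<in> {M. chain_pm n M}"
  then have "M = matching_of (code_of n M)" "code_of n M \<in> codes n"
    using matching_of_code_of assms admissible_code_of by (auto simp: codes_def)
  then show "M \<in> matching_of ` codes n"
    by blast
next
  fix M assume "M \<in> matching_of ` codes n"
  then show "M \<in> {M. chain_pm n M}"
    using perfect_matching_matching_of assms by (auto simp: codes_def)
qed

lemma inj_on_matching_of: "inj_on matching_of (codes n)"
  by (rule inj_on_inverseI[of _ "code_of n"]) (auto simp: codes_def code_of_matching_of)

section \<open>Forcing numbers\<close>

fun state_weight :: "state \<Rightarrow> nat" where
  "state_weight (Caps _ _) = 2" | "state_weight Left = 1" | "state_weight Right = 1"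

definition weight :: "state list \<Rightarrow> nat" where
  "weight xs = sum_list (map state_weight xs)"

fun forcing_edges :: "nat \<Rightarrow> state \<Rightarrow> vert set set" where
  "forcing_edges i (Caps b1 b2) =
     {if b1 then cap_edge i True C6 C1 else cap_edge i True C5 C6,
      if b2 then cap_edge i False C6 C1 else cap_edge i False C5 C6}"
| "forcing_edges i Left = {left_edge i True}"
| "forcing_edges i Right = {right_edge i True}"

definition forcing_edges_of :: "state list \<Rightarrow> vert set set" where
  "forcing_edges_of xs = (\<Union>i<length xs. forcing_edges i (xs ! i))"

lemma forcing_edges_subset: "forcing_edges i x \<subseteq> state_edges i x"
  by (cases x) (auto simp: kekule_def)

lemma finite_forcing_edges: "finite (forcing_edges i x)"
  by (cases x) simp_all

lemma card_forcing_edges: "card (forcing_edges i x) = state_weight x"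
  by (cases x) (auto simp: edge_defs doubleton_eq_iff)

lemma forcing_edges_determine_state: "forcing_edges i x \<subseteq> state_edges i y \<Longrightarrow> x = y"
  by (cases x; cases y) (auto simp: edge_defs kekule_def doubleton_eq_iff split: if_splits)

lemma card_forcing_edges_of: "card (forcing_edges_of xs) = weight xs"
proof -
  have "card (forcing_edges_of xs) = (\<Sum>i<length xs. card (forcing_edges i (xs ! i)))"
  proof (unfold forcing_edges_of_def, rule card_UN_disjoint)
    show "\<forall>i\<in>{..<length xs}. finite (forcing_edges i (xs ! i))"
      using finite_forcing_edges by blast
    show "\<forall>i\<in>{..<length xs}. \<forall>j\<in>{..<length xs}. i \<noteq> j \<longrightarrow>
        forcing_edges i (xs ! i) \<inter> forcing_edges j (xs ! j) = {}"
      using forcing_edges_subset state_edges_disjoint by blast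
  qed simp
  then show ?thesis
    by (simp add: card_forcing_edges weight_def sum_list_sum_nth atLeast0LessThan)
qed

lemma forcing_set_forcing_edges_of:
  assumes "admissible xs" "0 < length xs"
  shows "forcing_set (\<Union>(chain_edges (length xs))) (chain_edges (length xs)) (matching_of xs)
           (forcing_edges_of xs)"
  unfolding forcing_set_def
proof (intro conjI allI impI)
  show "forcing_edges_of xs \<subseteq> matching_of xs"
    using forcing_edges_subset unfolding forcing_edges_of_def matching_of_def by blast
next
  fix M assume M: "chain_pm (length xs) M \<and> forcing_edges_of xs \<subseteq> M"
  define ys where "ys = code_of (length xs) M"
  have "ys ! i = xs ! i" if i: "i < length xs" for i
  proof -
    have "forcing_edges i (xs ! i) \<subseteq> state_edges i (ys ! i)"
    proof
      fix e assume e: "e \<in> forcing_edges i (xs ! i)"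
      then obtain s c where "Cap i s c \<in> e"
        by (cases "xs ! i") (auto simp: edge_defs split: if_splits)
      moreover have "e \<in> matching_of ys"
        using e M i matching_of_code_of[of "length xs" M] assms(2)
        unfolding ys_def forcing_edges_of_def by blast
      moreover have "i < length ys"
        using i by (simp add: ys_def)
      ultimately show "e \<in> state_edges i (ys ! i)"
        using matching_of_at_Cap[of i ys e] by blast
    qed
    then show ?thesis
      by (rule forcing_edges_determine_state[symmetric])
  qed
  then have "ys = xs"
    by (intro nth_equalityI) (simp_all add: ys_def)
  then show "M = matching_of xs"
    using matching_of_code_of[of "length xs" M] M assms(2) by (simp add: ys_def)
qed

fun flip :: "state \<Rightarrow> bool \<Rightarrow> state" where
  "flip (Caps b1 b2) b = (if b then Caps (\<not> b1) b2 else Caps b1 (\<not> b2))"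
| "flip Left _ = Caps True True"
| "flip Right _ = Caps False False"

definition flips :: "state list \<Rightarrow> (nat \<times> bool) set" where
  "flips xs = (SIGMA i:{..<length xs}. {b. b \<or> is_Caps (xs ! i)})"

lemma card_flips: "card (flips xs) = weight xs"
proof -
  have "{b. b \<or> is_Caps x} = (if is_Caps x then UNIV else {True})" for x
    by auto
  then have "card {b. b \<or> is_Caps x} = state_weight x" for x
    by (simp only:) (cases x; simp)
  then show ?thesis
    by (simp add: flips_def card_SigmaI weight_def sum_list_sum_nth atLeast0LessThan)
qed

lemma nth_list_update_cases: "xs[i := y] ! k = xs ! k \<or> xs[i := y] ! k = y"
  by (cases "i < length xs") (auto simp: nth_list_update list_update_beyond)

lemma admissible_update_Caps: "admissible xs \<Longrightarrow> is_Caps y \<Longrightarrow> admissible (xs[i := y])"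
  unfolding admissible_iff_nth
  using nth_list_update_cases[of xs i y] by (metis length_list_update state.disc(2,3))

lemma free_rung_update_Caps: "free_rung xs j \<Longrightarrow> is_Caps y \<Longrightarrow> free_rung (xs[i := y]) j"
  unfolding free_rung_def
  using nth_list_update_cases[of xs i y] by (metis length_list_update state.disc(2,3))

lemma matching_of_update_diff:
  assumes "is_Caps y" "i < length xs"
  shows "matching_of xs - matching_of (xs[i := y]) \<subseteq> state_edges i (xs ! i) - state_edges i y"
proof
  fix e assume e: "e \<in> matching_of xs - matching_of (xs[i := y])"
  then consider k where "k < length xs" "e \<in> state_edges k (xs ! k)"
    | j where "e = rung j" "j \<le> length xs" "free_rung xs j"
    unfolding matching_of_def by blast
  then show "e \<in> state_edges i (xs ! i) - state_edges i y"
  proof cases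
    case (1 k)
    then have "e \<in> state_edges k (xs[i := y] ! k)" if "k \<noteq> i"
      using that by simp
    moreover have "state_edges k (xs[i := y] ! k) \<subseteq> matching_of (xs[i := y])"
      using 1 unfolding matching_of_def by auto
    moreover have "state_edges i y \<subseteq> matching_of (xs[i := y])"
      using assms(2) unfolding matching_of_def by force
    ultimately show ?thesis
      using 1 e by blast
  next
    case (2 j)
    then have "e \<in> matching_of (xs[i := y])"
      using free_rung_update_Caps[OF _ assms(1)] unfolding matching_of_def by auto
    with e show ?thesis
      by blast
  qed
qed

lemma state_edges_flip_disjoint:
  "(state_edges i (Caps b1 b2) - state_edges i (Caps (\<not> b1) b2)) \<inter>
   (state_edges i (Caps b1 b2) - state_edges i (Caps b1 (\<not> b2))) = {}"
  by (cases b1; cases b2) (auto simp: kekule_def edge_defs doubleton_eq_iff)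

lemma flip_diffs_disjoint:
  assumes "b \<or> is_Caps x" "b' \<or> is_Caps x" "b \<noteq> b'"
  shows "(state_edges i x - state_edges i (flip x b)) \<inter> (state_edges i x - state_edges i (flip x b')) = {}"
proof -
  obtain b1 b2 where "x = Caps b1 b2"
    using assms by (cases x) auto
  then show ?thesis
    using assms(3) state_edges_flip_disjoint[of i b1 b2] by (cases b) (auto simp: Int_commute)
qed

lemma is_Caps_flip: "is_Caps (flip x b)"
  by (cases x) simp_all

lemma flip_neq: "b \<or> is_Caps x \<Longrightarrow> flip x b \<noteq> x"
  by (cases x) auto

lemma weight_le_forcing_set:
  assumes "admissible xs" "0 < length xs"
    and S: "forcing_set (\<Union>(chain_edges (length xs))) (chain_edges (length xs)) (matching_of xs) S"
  shows "weight xs \<le> card S"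
proof -
  define alt where "alt p = matching_of (xs[fst p := flip (xs ! fst p) (snd p)])" for p
  have "card (flips xs) \<le> card S"
  proof (rule card_le_forcing_set[OF S, of _ alt])
    show "finite (matching_of xs)"
      using matching_of_subset[OF assms(2)] finite_chain_edges by (rule finite_subset)
  next
    fix p assume "p \<in> flips xs"
    then obtain i b where p: "p = (i, b)" "i < length xs" "b \<or> is_Caps (xs ! i)"
      unfolding flips_def by blast
    let ?ys = "xs[i := flip (xs ! i) b]"
    have "chain_pm (length xs) (alt p)"
      using perfect_matching_matching_of[OF admissible_update_Caps[OF assms(1) is_Caps_flip]] assms(2)
      by (simp add: alt_def p)
    moreover have "alt p \<noteq> matching_of xs"
    proof
      assume "alt p = matching_of xs"
      then have "code_of (length ?ys) (matching_of ?ys) = code_of (length xs) (matching_of xs)"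
        by (simp add: alt_def p)
      then have "?ys ! i = xs ! i"
        by (simp only: code_of_matching_of)
      with p(2,3) show False
        using flip_neq by simp
    qed
    ultimately show "chain_pm (length xs) (alt p) \<and> alt p \<noteq> matching_of xs"
      by blast
  next
    fix p q assume pq: "p \<in> flips xs" "q \<in> flips xs" "p \<noteq> q"
    obtain i b i' b' where p: "p = (i, b)" and q: "q = (i', b')"
      by fastforce
    have diff: "matching_of xs - alt (k, c) \<subseteq> state_edges k (xs ! k) - state_edges k (flip (xs ! k) c)"
      if "k < length xs" for k c
      using matching_of_update_diff[OF is_Caps_flip that] by (simp add: alt_def)
    show "(matching_of xs - alt p) \<inter> (matching_of xs - alt q) = {}"
    proof (cases "i = i'")
      case True
      with pq have "b \<noteq> b'" "b \<or> is_Caps (xs ! i)" "b' \<or> is_Caps (xs ! i)" "i < length xs"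
        unfolding p q flips_def by auto
      then show ?thesis
        using diff[of i b] diff[of i b'] flip_diffs_disjoint[of b "xs ! i" b' i] True
        unfolding p q by blast
    next
      case False
      with pq have "i < length xs" "i' < length xs"
        unfolding p q flips_def by auto
      then show ?thesis
        using diff[of i b] diff[of i' b'] state_edges_disjoint[OF False, of "xs ! i" "xs ! i'"]
        unfolding p q by blast
    qed
  qed
  then show ?thesis
    by (simp add: card_flips)
qed

theorem forcing_number_matching_of:
  assumes "admissible xs" "0 < length xs"
  shows "forcing_number (\<Union>(chain_edges (length xs))) (chain_edges (length xs)) (matching_of xs) =
           weight xs"
  using forcing_set_forcing_edges_of[OF assms] card_forcing_edges_of weight_le_forcing_set[OF assms]
  by (rule forcing_numberI)

section \<open>The recurrence\<close>

definition code_poly :: "nat \<Rightarrow> int poly" where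
  "code_poly n = (\<Sum>xs\<in>codes n. monom 1 (weight xs))"

lemma code_poly_0: "code_poly 0 = 1"
  by (simp add: code_poly_def codes_0 weight_def)

lemma F_pyrene_code_poly: "F_pyrene n = code_poly n"
proof (cases "n = 0")
  case True
  then show ?thesis
    by (simp add: F_pyrene_0 code_poly_0)
next
  case False
  then have "0 < n"
    by simp
  have "F_pyrene n =
      (\<Sum>M\<in>matching_of ` codes n. monom 1 (forcing_number (\<Union>(chain_edges n)) (chain_edges n) M))"
    unfolding F_pyrene_eq forcing_poly_def chain_matchings_eq[OF \<open>0 < n\<close>] ..
  also have "\<dots> =
      (\<Sum>xs\<in>codes n. monom 1 (forcing_number (\<Union>(chain_edges n)) (chain_edges n) (matching_of xs)))"
    by (simp add: sum.reindex inj_on_matching_of)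
  also have "\<dots> = code_poly n"
    unfolding code_poly_def using forcing_number_matching_of \<open>0 < n\<close>
    by (intro sum.cong) (auto simp: codes_def)
  finally show ?thesis .
qed

definition can_precede :: "state \<Rightarrow> state list \<Rightarrow> bool" where
  "can_precede x xs \<longleftrightarrow> \<not> (x = Right \<and> xs \<noteq> [] \<and> hd xs = Left)"

lemma admissible_Cons: "admissible (x # xs) \<longleftrightarrow> can_precede x xs \<and> admissible xs"
  unfolding admissible_def can_precede_def by (auto simp: successively_Cons)

lemma weight_Cons [simp]: "weight (x # xs) = state_weight x + weight xs"
  by (simp add: weight_def)

lemma UNIV_state:
  "UNIV = {Caps False False, Caps False True, Caps True False, Caps True True, Left, Right}"
proof -
  have "x \<in> {Caps False False, Caps False True, Caps True False, Caps True True, Left, Right}" for x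
    by (cases x) auto
  then show ?thesis
    by blast
qed

lemma finite_codes: "finite (codes n)"
proof (rule finite_subset)
  show "codes n \<subseteq> {xs. set xs \<subseteq> UNIV \<and> length xs = n}"
    by (auto simp: codes_def)
  show "finite {xs :: state list. set xs \<subseteq> UNIV \<and> length xs = n}"
    by (rule finite_lists_length_eq) (simp add: UNIV_state)
qed

lemma sum_codes_Suc:
  "(\<Sum>ys\<in>codes (Suc n). f ys) = (\<Sum>x\<in>UNIV. \<Sum>xs\<in>{xs \<in> codes n. can_precede x xs}. f (x # xs))"
proof -
  let ?S = "SIGMA x:UNIV. {xs \<in> codes n. can_precede x xs}"
  have "codes (Suc n) = (\<lambda>(x, xs). x # xs) ` ?S"
    by (auto simp: codes_def admissible_Cons length_Suc_conv image_iff)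
  moreover have "inj_on (\<lambda>(x, xs). x # xs) ?S"
    by (auto intro: inj_onI)
  ultimately have "(\<Sum>ys\<in>codes (Suc n). f ys) = (\<Sum>(x, xs)\<in>?S. f (x # xs))"
    by (simp add: sum.reindex split_def)
  also have "\<dots> = (\<Sum>x\<in>UNIV. \<Sum>xs\<in>{xs \<in> codes n. can_precede x xs}. f (x # xs))"
    by (rule sum.Sigma[symmetric]) (auto simp: UNIV_state finite_codes)
  finally show ?thesis .
qed

definition left_code_poly :: "nat \<Rightarrow> int poly" where
  "left_code_poly n = (\<Sum>xs\<in>{xs \<in> codes n. xs \<noteq> [] \<and> hd xs = Left}. monom 1 (weight xs))"

lemma code_poly_Suc:
  "code_poly (Suc n) = (4 * monom 1 2 + 2 * monom 1 1) * code_poly n - monom 1 1 * left_code_poly n"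
proof -
  have inner: "(\<Sum>xs\<in>{xs \<in> codes n. can_precede x xs}. monom 1 (weight xs)) =
      (if x = Right then code_poly n - left_code_poly n else code_poly n)" for x
  proof (cases "x = Right")
    case True
    then have "{xs \<in> codes n. can_precede x xs} = codes n - {xs \<in> codes n. xs \<noteq> [] \<and> hd xs = Left}"
      by (auto simp: can_precede_def)
    with True show ?thesis
      unfolding code_poly_def left_code_poly_def by (simp add: sum_diff finite_codes)
  qed (simp add: can_precede_def code_poly_def)
  have monom_add:
    "monom 1 (state_weight x + weight xs) = monom 1 (state_weight x) * monom (1 :: int) (weight xs)"
    for x xs
    by (simp add: mult_monom)
  have "code_poly (Suc n) =
      (\<Sum>x\<in>UNIV. monom 1 (state_weight x) *
        (if x = Right then code_poly n - left_code_poly n else code_poly n))"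
    unfolding code_poly_def sum_codes_Suc weight_Cons monom_add
    by (simp only: sum_distrib_left[symmetric] inner[unfolded code_poly_def])
  also have "\<dots> = (4 * monom 1 2 + 2 * monom 1 1) * code_poly n - monom 1 1 * left_code_poly n"
    by (simp add: UNIV_state algebra_simps)
  finally show ?thesis .
qed

lemma left_code_poly_0: "left_code_poly 0 = 0"
proof -
  have empty: "{xs \<in> codes 0. xs \<noteq> [] \<and> hd xs = Left} = {}"
    by (auto simp: codes_0)
  show ?thesis
    unfolding left_code_poly_def empty by simp
qed

lemma left_code_poly_Suc: "left_code_poly (Suc n) = monom 1 1 * code_poly n"
proof -
  have "{xs \<in> codes (Suc n). xs \<noteq> [] \<and> hd xs = Left} = (#) Left ` codes n"
    by (auto simp: codes_def admissible_Cons can_precede_def length_Suc_conv)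
  then show ?thesis
    unfolding left_code_poly_def code_poly_def
    by (simp add: sum.reindex mult_monom sum_distrib_left)
qed

lemma monom_sum_eq_pCons: "4 * monom 1 2 + 2 * monom 1 1 = ([:0, 2, 4:] :: int poly)"
  by (rule poly_eqI) (simp add: coeff_monom coeff_pCons numeral_poly split: nat.split)

lemma monom_square_eq_pCons: "monom 1 1 * monom 1 1 = ([:0, 0, 1:] :: int poly)"
  by (rule poly_eqI) (simp add: mult_monom coeff_monom coeff_pCons split: nat.split)

theorem theorem3p1:
  shows "F_pyrene 0 = 1 \<and> F_pyrene 1 = [:0, 2, 4:] \<and>
         (\<forall>n\<ge>2. F_pyrene n = [:0, 2, 4:] * F_pyrene (n - 1) - [:0, 0, 1:] * F_pyrene (n - 2))"
proof (intro conjI allI impI)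
  show "F_pyrene 0 = 1"
    by (rule F_pyrene_0)
  show "F_pyrene 1 = [:0, 2, 4:]"
    using code_poly_Suc[of 0] monom_sum_eq_pCons
    by (simp add: F_pyrene_code_poly code_poly_0 left_code_poly_0)
  fix n :: nat assume "2 \<le> n"
  then obtain m where n: "n = Suc (Suc m)"
    using add_2_eq_Suc le_Suc_ex by blast
  show "F_pyrene n = [:0, 2, 4:] * F_pyrene (n - 1) - [:0, 0, 1:] * F_pyrene (n - 2)"
    using code_poly_Suc[of "Suc m"] left_code_poly_Suc[of m]
    by (simp add: F_pyrene_code_poly n monom_sum_eq_pCons[symmetric] monom_square_eq_pCons[symmetric]
        mult.assoc)
qed

end
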